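(* If $D\subseteq\mathcal M^d$ is an nc-domain, then its envelope $D^\sim$ is an nc-domain.
   Context: $\mathcal M^d=\bigcup_n\mathcal M_n^d$. An nc-set is a subset of $\mathcal M^d$ closed under direct sums and unitary conjugation; an nc-domain is an nc-set $D$ with $D\cap\mathcal M_n^d$ open in $\mathcal M_n^d$ for each $n$. A set $B$ is invariant if $S^{-1}(B\cap\mathcal M_n^d)S\subseteq B$ for all $n$ and invertible $S\in\mathcal M_n$. The envelope $D^\sim$ is the smallest invariant nc-set containing $D$. *)

theory Defs
  imports "Jordan_Normal_Form.Schur_Decomposition"
begin

definition lvl :: "nat \<Rightarrow> nat \<Rightarrow> complex mat list set" where
  "lvl d n = {X. length X = d \<and> (\<forall>A\<in>set X. A \<in> carrier_mat n n)}"

definition Md :: "nat \<Rightarrow> complex mat list set" where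
  "Md d = (\<Union>n\<in>{1..}. lvl d n)"

definition dsum :: "complex mat list \<Rightarrow> complex mat list \<Rightarrow> complex mat list" where
  "dsum X Y = map2 (\<lambda>A B. four_block_mat A (0\<^sub>m (dim_row A) (dim_col B)) (0\<^sub>m (dim_row B) (dim_col A)) B) X Y"

definition unitary :: "nat \<Rightarrow> complex mat \<Rightarrow> bool" where
  "unitary n U \<longleftrightarrow> U \<in> carrier_mat n n \<and> U * mat_adjoint U = 1\<^sub>m n \<and> mat_adjoint U * U = 1\<^sub>m n"

definition conj_tuple :: "complex mat \<Rightarrow> complex mat \<Rightarrow> complex mat list \<Rightarrow> complex mat list" where
  "conj_tuple T S X = map (\<lambda>A. T * A * S) X"

definition nc_set :: "nat \<Rightarrow> complex mat list set \<Rightarrow> bool" where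
  "nc_set d D \<longleftrightarrow> D \<subseteq> Md d
     \<and> (\<forall>X\<in>D. \<forall>Y\<in>D. dsum X Y \<in> D)
     \<and> (\<forall>n U X. unitary n U \<and> X \<in> D \<inter> lvl d n \<longrightarrow> conj_tuple (mat_adjoint U) U X \<in> D)"

text \<open>Openness in M_n^d, identified with C^(d n^2) (entrywise metric).\<close>
definition open_lvl :: "nat \<Rightarrow> nat \<Rightarrow> complex mat list set \<Rightarrow> bool" where
  "open_lvl d n U \<longleftrightarrow> U \<subseteq> lvl d n \<and>
     (\<forall>X\<in>U. \<exists>e>0. \<forall>Y\<in>lvl d n.
        (\<forall>k<d. \<forall>i<n. \<forall>j<n. cmod ((X!k) $$ (i,j) - (Y!k) $$ (i,j)) < e) \<longrightarrow> Y \<in> U)"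

definition nc_domain :: "nat \<Rightarrow> complex mat list set \<Rightarrow> bool" where
  "nc_domain d D \<longleftrightarrow> nc_set d D \<and> (\<forall>n\<ge>1. open_lvl d n (D \<inter> lvl d n))"

definition invariant :: "nat \<Rightarrow> complex mat list set \<Rightarrow> bool" where
  "invariant d B \<longleftrightarrow> (\<forall>n S T X. S \<in> carrier_mat n n \<and> T \<in> carrier_mat n n \<and>
      S * T = 1\<^sub>m n \<and> T * S = 1\<^sub>m n \<and> X \<in> B \<inter> lvl d n \<longrightarrow> conj_tuple T S X \<in> B)"

definition envelope :: "nat \<Rightarrow> complex mat list set \<Rightarrow> complex mat list set" where
  "envelope d D = \<Inter>{B. nc_set d B \<and> invariant d B \<and> D \<subseteq> B}"

end

theory Submission
  imports Defs "Jordan_Normal_Form.Jordan_Normal_Form"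
begin

text \<open>The envelope of an nc-set \<open>D\<close> is its similarity orbit
  \<open>{S\<^sup>-\<^sup>1 X S | X \<in> D at level n, S invertible n \<times> n}\<close>: the orbit is invariant, and it is again an
  nc-set because a direct sum of conjugates is the conjugate of the direct sum by the
  block-diagonal matrix \<open>S\<^sub>1 \<oplus> S\<^sub>2\<close>. At a fixed level the orbit is the union of the images of
  \<open>D\<close> under the homeomorphisms \<open>X \<mapsto> S\<^sup>-\<^sup>1 X S\<close>, hence open when \<open>D\<close> is.\<close>

lemma lvl_conj_tuple:
  "X \<in> lvl d n \<Longrightarrow> T \<in> carrier_mat n n \<Longrightarrow> S \<in> carrier_mat n n \<Longrightarrow> conj_tuple T S X \<in> lvl d n"
  unfolding lvl_def conj_tuple_def by auto

lemma lvl_level_unique: "X \<in> lvl d n \<Longrightarrow> X \<in> lvl d m \<Longrightarrow> n = m \<or> X = []"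
  unfolding lvl_def by (cases X) auto

lemma Nil_in_lvl_0: "[] \<in> lvl 0 n"
  unfolding lvl_def by simp

lemma conj_tuple_Nil [simp]: "conj_tuple T S [] = []"
  unfolding conj_tuple_def by simp

lemma conj_tuple_conj_tuple:
  assumes "X \<in> lvl d n" "T \<in> carrier_mat n n" "S \<in> carrier_mat n n"
    "T' \<in> carrier_mat n n" "S' \<in> carrier_mat n n"
  shows "conj_tuple T' S' (conj_tuple T S X) = conj_tuple (T' * T) (S * S') X"
  unfolding conj_tuple_def map_map
proof (rule map_cong[OF refl])
  fix A assume "A \<in> set X"
  then have "A \<in> carrier_mat n n" using assms(1) unfolding lvl_def by auto
  then show "((\<lambda>A. T' * A * S') \<circ> (\<lambda>A. T * A * S)) A = T' * T * A * (S * S')"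
    using assms by (simp add: assoc_mult_mat[of _ n n _ n _ n])
qed

lemma conj_tuple_one: "X \<in> lvl d n \<Longrightarrow> conj_tuple (1\<^sub>m n) (1\<^sub>m n) X = X"
  unfolding conj_tuple_def lvl_def by (intro map_idI) auto

definition inverse_mats :: "nat \<Rightarrow> 'a :: semiring_1 mat \<Rightarrow> 'a mat \<Rightarrow> bool" where
  "inverse_mats n S T \<longleftrightarrow>
     S \<in> carrier_mat n n \<and> T \<in> carrier_mat n n \<and> S * T = 1\<^sub>m n \<and> T * S = 1\<^sub>m n"

lemma invariant_iff_inverse_mats:
  "invariant d B \<longleftrightarrow> (\<forall>n S T X. inverse_mats n S T \<and> X \<in> B \<inter> lvl d n \<longrightarrow> conj_tuple T S X \<in> B)"
  unfolding invariant_def inverse_mats_def by blast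

lemma inverse_mats_one: "inverse_mats n (1\<^sub>m n) (1\<^sub>m n)"
  unfolding inverse_mats_def by simp

lemma inverse_mats_sym: "inverse_mats n S T \<Longrightarrow> inverse_mats n T S"
  unfolding inverse_mats_def by blast

lemma inverse_mats_mult:
  assumes "inverse_mats n S T" "inverse_mats n S' T'"
  shows "inverse_mats n (S * S') (T' * T)"
proof -
  have "P * P' * (Q' * Q) = 1\<^sub>m n"
    if "inverse_mats n P Q" "inverse_mats n P' Q'" for P Q P' Q' :: "'a mat"
  proof -
    have c: "P \<in> carrier_mat n n" "Q \<in> carrier_mat n n" "P' \<in> carrier_mat n n" "Q' \<in> carrier_mat n n"
      and inv: "P * Q = 1\<^sub>m n" "P' * Q' = 1\<^sub>m n"
      using that unfolding inverse_mats_def by auto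
    have "P * P' * (Q' * Q) = P * ((P' * Q') * Q)"
      using c by (simp add: assoc_mult_mat[of _ n n _ n _ n])
    then show ?thesis using c inv by simp
  qed
  from this[OF assms] this[OF assms(2,1)[THEN inverse_mats_sym]] assms show ?thesis
    unfolding inverse_mats_def by auto
qed

lemma unitary_inverse_mats: "unitary n U \<Longrightarrow> inverse_mats n U (mat_adjoint U)"
  unfolding unitary_def inverse_mats_def by (auto simp: mat_adjoint_def)

definition diag2 :: "'a :: zero mat \<Rightarrow> 'a mat \<Rightarrow> 'a mat" where
  "diag2 A B = four_block_mat A (0\<^sub>m (dim_row A) (dim_col B)) (0\<^sub>m (dim_row B) (dim_col A)) B"

lemma dsum_eq_map2_diag2: "dsum X Y = map2 diag2 X Y"
  unfolding dsum_def diag2_def ..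

lemma diag2_carrier:
  "A \<in> carrier_mat n n \<Longrightarrow> B \<in> carrier_mat m m \<Longrightarrow> diag2 A B \<in> carrier_mat (n + m) (n + m)"
  unfolding diag2_def by auto

lemma diag2_square:
  "A \<in> carrier_mat n n \<Longrightarrow> B \<in> carrier_mat m m \<Longrightarrow> diag2 A B = four_block_mat A (0\<^sub>m n m) (0\<^sub>m m n) B"
  unfolding diag2_def by auto

lemma diag2_mult:
  fixes A C :: "'a :: semiring_0 mat"
  assumes "A \<in> carrier_mat n n" "C \<in> carrier_mat n n" "B \<in> carrier_mat m m" "D \<in> carrier_mat m m"
  shows "diag2 A B * diag2 C D = diag2 (A * C) (B * D)"
proof -
  have "diag2 A B * diag2 C D = four_block_mat (A * C) (0\<^sub>m n m) (0\<^sub>m m n) (B * D)"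
    using assms by (simp add: diag2_square mult_four_block_mat[of _ n n _ m _ m _ _ n _ m])
  also have "\<dots> = diag2 (A * C) (B * D)"
    using assms by (intro diag2_square[symmetric]) auto
  finally show ?thesis .
qed

lemma diag2_one: "diag2 (1\<^sub>m n) (1\<^sub>m m) = 1\<^sub>m (n + m)"
  unfolding diag2_def by simp

lemma inverse_mats_diag2:
  assumes "inverse_mats n S1 T1" "inverse_mats m S2 T2"
  shows "inverse_mats (n + m) (diag2 S1 S2) (diag2 T1 T2)"
  using assms unfolding inverse_mats_def by (auto simp: diag2_mult diag2_carrier diag2_one)

lemma dsum_lvl: "X \<in> lvl d n \<Longrightarrow> Y \<in> lvl d m \<Longrightarrow> dsum X Y \<in> lvl d (n + m)"
  unfolding lvl_def dsum_eq_map2_diag2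
  by (auto simp: set_zip diag2_carrier)

lemma dsum_conj_tuple:
  assumes X: "X \<in> lvl d n" and Y: "Y \<in> lvl d m"
    and c: "T1 \<in> carrier_mat n n" "S1 \<in> carrier_mat n n" "T2 \<in> carrier_mat m m" "S2 \<in> carrier_mat m m"
  shows "dsum (conj_tuple T1 S1 X) (conj_tuple T2 S2 Y) = conj_tuple (diag2 T1 T2) (diag2 S1 S2) (dsum X Y)"
proof -
  have block: "diag2 (T1 * A * S1) (T2 * B * S2) = diag2 T1 T2 * diag2 A B * diag2 S1 S2"
    if "A \<in> set X" "B \<in> set Y" for A B
  proof -
    have AB: "A \<in> carrier_mat n n" "B \<in> carrier_mat m m" using that X Y unfolding lvl_def by auto
    have "diag2 T1 T2 * diag2 A B * diag2 S1 S2 = diag2 (T1 * A) (T2 * B) * diag2 S1 S2"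
      using c AB by (simp only: diag2_mult)
    also have "\<dots> = diag2 (T1 * A * S1) (T2 * B * S2)"
      using c AB by (intro diag2_mult) auto
    finally show ?thesis by (rule sym)
  qed
  show ?thesis
    unfolding dsum_eq_map2_diag2 conj_tuple_def zip_map1 zip_map2 map_map
    by (auto intro!: map_cong block elim: in_set_zipE simp del: assoc_mult_mat)
qed

definition similarity_orbit :: "nat \<Rightarrow> complex mat list set \<Rightarrow> complex mat list set" where
  "similarity_orbit d D = {conj_tuple T S X | n S T X. inverse_mats n S T \<and> X \<in> D \<inter> lvl d n}"

lemma similarity_orbitI:
  "inverse_mats n S T \<Longrightarrow> X \<in> D \<Longrightarrow> X \<in> lvl d n \<Longrightarrow> conj_tuple T S X \<in> similarity_orbit d D"
  unfolding similarity_orbit_def by blast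

lemma similarity_orbitE:
  assumes "Z \<in> similarity_orbit d D"
  obtains n S T X where "inverse_mats n S T" "X \<in> D" "X \<in> lvl d n" "Z = conj_tuple T S X"
  using assms unfolding similarity_orbit_def by blast

lemma subset_similarity_orbit:
  assumes "D \<subseteq> Md d"
  shows "D \<subseteq> similarity_orbit d D"
proof
  fix X assume "X \<in> D"
  then obtain n where "X \<in> lvl d n" using assms unfolding Md_def by auto
  with \<open>X \<in> D\<close> show "X \<in> similarity_orbit d D"
    using similarity_orbitI[OF inverse_mats_one] conj_tuple_one by metis
qed

text \<open>A witness can always be taken at the level of the orbit point itself; the only point
  lying in several levels is the empty tuple (for \<open>d = 0\<close>).\<close>

lemma similarity_orbit_at_level:
  assumes "Z \<in> similarity_orbit d D" "Z \<in> lvl d n"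
  obtains S T X where "inverse_mats n S T" "X \<in> D" "X \<in> lvl d n" "Z = conj_tuple T S X"
proof -
  obtain k S T X where w: "inverse_mats k S T" "X \<in> D" "X \<in> lvl d k" "Z = conj_tuple T S X"
    using assms(1) by (rule similarity_orbitE)
  then have "Z \<in> lvl d k" using lvl_conj_tuple by (auto simp: inverse_mats_def)
  then consider "k = n" | "Z = []" using lvl_level_unique assms(2) by blast
  then show ?thesis
  proof cases
    case 1
    with w that show ?thesis by blast
  next
    case 2
    then have "X = []" "d = 0" using w assms(2) by (auto simp: conj_tuple_def lvl_def)
    then show ?thesis
      using that[OF inverse_mats_one] w(2) Nil_in_lvl_0 \<open>Z = []\<close> by simp
  qed
qed

lemma invariant_similarity_orbit: "invariant d (similarity_orbit d D)"
  unfolding invariant_iff_inverse_mats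
proof (intro allI impI, elim conjE IntE)
  fix n and S' T' :: "complex mat" and Z
  assume inv': "inverse_mats n S' T'" and Z: "Z \<in> similarity_orbit d D" "Z \<in> lvl d n"
  obtain S T X where w: "inverse_mats n S T" "X \<in> D" "X \<in> lvl d n" "Z = conj_tuple T S X"
    using Z by (rule similarity_orbit_at_level)
  have "conj_tuple T' S' Z = conj_tuple (T' * T) (S * S') X"
    using w inv' by (simp add: conj_tuple_conj_tuple inverse_mats_def)
  then show "conj_tuple T' S' Z \<in> similarity_orbit d D"
    using similarity_orbitI[OF inverse_mats_mult[OF w(1) inv'] w(2,3)] by simp
qed

lemma similarity_orbit_subset_Md:
  assumes "D \<subseteq> Md d"
  shows "similarity_orbit d D \<subseteq> Md d"
proof
  fix Z assume "Z \<in> similarity_orbit d D"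
  then obtain n S T X where w: "inverse_mats n S T" "X \<in> D" "X \<in> lvl d n" "Z = conj_tuple T S X"
    by (rule similarity_orbitE)
  obtain k where k: "k \<ge> 1" "X \<in> lvl d k" using w(2) assms unfolding Md_def by auto
  consider "k = n" | "X = []" using lvl_level_unique w(3) k(2) by blast
  then show "Z \<in> Md d"
  proof cases
    case 1
    then have "Z \<in> lvl d k" using w lvl_conj_tuple by (auto simp: inverse_mats_def)
    then show ?thesis using k(1) unfolding Md_def by auto
  next
    case 2
    then show ?thesis using w assms by auto
  qed
qed

lemma similarity_orbit_dsum:
  assumes D: "nc_set d D" and Z1: "Z1 \<in> similarity_orbit d D" and Z2: "Z2 \<in> similarity_orbit d D"
  shows "dsum Z1 Z2 \<in> similarity_orbit d D"
proof -
  obtain n S1 T1 X where w1: "inverse_mats n S1 T1" "X \<in> D" "X \<in> lvl d n" "Z1 = conj_tuple T1 S1 X"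
    using Z1 by (rule similarity_orbitE)
  obtain m S2 T2 Y where w2: "inverse_mats m S2 T2" "Y \<in> D" "Y \<in> lvl d m" "Z2 = conj_tuple T2 S2 Y"
    using Z2 by (rule similarity_orbitE)
  have "dsum Z1 Z2 = conj_tuple (diag2 T1 T2) (diag2 S1 S2) (dsum X Y)"
    using w1 w2 by (simp add: dsum_conj_tuple inverse_mats_def)
  moreover have "dsum X Y \<in> D" using D w1 w2 unfolding nc_set_def by blast
  ultimately show ?thesis
    using similarity_orbitI[OF inverse_mats_diag2[OF w1(1) w2(1)]] dsum_lvl[OF w1(3) w2(3)] by simp
qed

lemma nc_set_similarity_orbit:
  assumes D: "nc_set d D"
  shows "nc_set d (similarity_orbit d D)"
  unfolding nc_set_def
proof (intro conjI ballI allI impI)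
  show "similarity_orbit d D \<subseteq> Md d"
    using D unfolding nc_set_def by (intro similarity_orbit_subset_Md) simp
  show "dsum X Y \<in> similarity_orbit d D" if "X \<in> similarity_orbit d D" "Y \<in> similarity_orbit d D" for X Y
    using similarity_orbit_dsum[OF D that] .
  fix n U X assume "unitary n U \<and> X \<in> similarity_orbit d D \<inter> lvl d n"
  then show "conj_tuple (mat_adjoint U) U X \<in> similarity_orbit d D"
    using invariant_similarity_orbit unitary_inverse_mats
    unfolding invariant_iff_inverse_mats by blast
qed

lemma envelope_eq_similarity_orbit:
  assumes "nc_set d D"
  shows "envelope d D = similarity_orbit d D"
proof
  have "D \<subseteq> Md d" using assms unfolding nc_set_def by simp
  then show "envelope d D \<subseteq> similarity_orbit d D"
    unfolding envelope_def
    using nc_set_similarity_orbit[OF assms] invariant_similarity_orbit subset_similarity_orbit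
    by blast
  show "similarity_orbit d D \<subseteq> envelope d D"
    unfolding envelope_def similarity_orbit_def invariant_iff_inverse_mats by blast
qed

lemma norm_bound_pos: "\<exists>b > 0. norm_bound A b"
  using norm_bound_max[of A] unfolding norm_bound_def
  by (intro exI[of _ "max 1 (Max {norm (A $$ (i,j)) | i j. i < dim_row A \<and> j < dim_col A})"])
    fastforce

lemma norm_bound_conj_diff:
  fixes S T Y Z :: "'a :: real_normed_field mat"
  assumes c: "S \<in> carrier_mat n n" "T \<in> carrier_mat n n" "Y \<in> carrier_mat n n" "Z \<in> carrier_mat n n"
    and b: "norm_bound S s" "norm_bound T t" "norm_bound (Y - Z) \<delta>"
  shows "norm_bound (S * Y * T - S * Z * T) (s * \<delta> * of_nat n * t * of_nat n)"
proof -
  have "S * Y * T - S * Z * T = S * (Y - Z) * T"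
    using c by (simp add: mult_minus_distrib_mat minus_mult_distrib_mat[of _ n n])
  moreover have "norm_bound (S * (Y - Z)) (s * \<delta> * of_nat n)"
    using c b by (intro norm_bound_mult) auto
  ultimately show ?thesis
    using c b by (metis norm_bound_mult minus_carrier_mat mult_carrier_mat)
qed

lemma open_lvl_similarity_orbit:
  assumes D: "nc_domain d D" and n: "n \<ge> 1"
  shows "open_lvl d n (similarity_orbit d D \<inter> lvl d n)"
  unfolding open_lvl_def
proof (intro conjI ballI)
  fix Z assume "Z \<in> similarity_orbit d D \<inter> lvl d n"
  then obtain S T X where w: "inverse_mats n S T" "X \<in> D" "X \<in> lvl d n" "Z = conj_tuple T S X"
    and Z: "Z \<in> lvl d n"
    by (auto elim: similarity_orbit_at_level)
  have c: "S \<in> carrier_mat n n" "T \<in> carrier_mat n n" using w(1) unfolding inverse_mats_def by auto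
  have XZ: "X = conj_tuple S T Z"
    using w c by (simp add: conj_tuple_conj_tuple conj_tuple_one inverse_mats_def)
  obtain e where e: "e > 0" and eD: "\<forall>W\<in>lvl d n.
      (\<forall>k<d. \<forall>i<n. \<forall>j<n. cmod ((X!k) $$ (i,j) - (W!k) $$ (i,j)) < e) \<longrightarrow> W \<in> D \<inter> lvl d n"
    using D n w(2,3) unfolding nc_domain_def open_lvl_def by blast
  obtain s t where st: "s > 0" "t > 0" "norm_bound S s" "norm_bound T t"
    using norm_bound_pos by metis
  define \<delta> where "\<delta> = e / (2 * (s * t * of_nat n * of_nat n))"
  have "s * t * of_nat n * of_nat n > 0" using st n by simp
  then have \<delta>: "\<delta> > 0" "s * \<delta> * of_nat n * t * of_nat n < e"
    using e unfolding \<delta>_def by (simp_all add: field_simps)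
  show "\<exists>\<delta>>0. \<forall>Y\<in>lvl d n. (\<forall>k<d. \<forall>i<n. \<forall>j<n. cmod ((Z!k) $$ (i,j) - (Y!k) $$ (i,j)) < \<delta>) \<longrightarrow>
          Y \<in> similarity_orbit d D \<inter> lvl d n"
  proof (intro exI[of _ \<delta>] conjI \<delta>(1) ballI impI)
    fix Y assume Y: "Y \<in> lvl d n"
      and close: "\<forall>k<d. \<forall>i<n. \<forall>j<n. cmod ((Z!k) $$ (i,j) - (Y!k) $$ (i,j)) < \<delta>"
    define W where "W = conj_tuple S T Y"
    have W: "W \<in> lvl d n" unfolding W_def using lvl_conj_tuple Y c by simp
    have "cmod ((X!k) $$ (i,j) - (W!k) $$ (i,j)) < e" if k: "k < d" and ij: "i < n" "j < n" for k i j
    proof -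
      have ck: "Z!k \<in> carrier_mat n n" "Y!k \<in> carrier_mat n n" "length Z = d" "length Y = d"
        using Z Y k unfolding lvl_def by auto
      have "norm_bound (Z!k - Y!k) \<delta>"
        using close k ck by (auto simp: norm_bound_def less_imp_le)
      then have "norm_bound (S * Z!k * T - S * Y!k * T) (s * \<delta> * of_nat n * t * of_nat n)"
        using c ck st by (intro norm_bound_conj_diff) auto
      moreover have "X!k = S * Z!k * T" "W!k = S * Y!k * T"
        using XZ ck k by (auto simp: W_def conj_tuple_def)
      ultimately have "cmod ((X!k) $$ (i,j) - (W!k) $$ (i,j)) \<le> s * \<delta> * of_nat n * t * of_nat n"
        using ij ck c unfolding norm_bound_def by auto
      with \<delta>(2) show ?thesis by linarith
    qed
    then have "W \<in> D" using eD W by blast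
    moreover have "Y = conj_tuple T S W"
      using w(1) Y c by (simp add: W_def conj_tuple_conj_tuple conj_tuple_one inverse_mats_def)
    ultimately show "Y \<in> similarity_orbit d D \<inter> lvl d n"
      using similarity_orbitI[OF w(1) _ W] Y by simp
  qed
qed simp

theorem proposition3p6:
  fixes d :: nat and D :: "complex mat list set"
  assumes "nc_domain d D"
  shows "nc_domain d (envelope d D)"
proof -
  have "nc_set d D" using assms unfolding nc_domain_def by simp
  then show ?thesis
    unfolding nc_domain_def envelope_eq_similarity_orbit[OF \<open>nc_set d D\<close>]
    using nc_set_similarity_orbit open_lvl_similarity_orbit[OF assms] by blast
qed

end
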